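(* Let $A$ be the structure matrix of a fully connected $L$-layer ReLU multilayer perceptron (as described in the context) with $m$ weights and $H$ hidden nodes. Then $\operatorname{rank}(A)=m-H$.
   Context: Network: fix $L\ge 2$ and integers $h_0=d,h_1,\dots,h_{L-1},h_L=K\ge 1$. Layer $l$ has nodes $O^l_1,\dots,O^l_{h_l}$; consecutive layers are fully connected by edges $O^{l-1}_i\to O^l_j$ carrying weights $w^l(i,j)$, with no biases, so there are $m=\sum_{l=1}^L h_{l-1}h_l$ edges/weights, indexed $1,\dots,m$. The hidden nodes are the nodes of layers $1,\dots,L-1$; their number is $H=\sum_{l=1}^{L-1}h_l$. Activations are ReLU, $\sigma(t)=\max(t,0)$. Paths and structure matrix: a path is a tuple $(i_0,\dots,i_L)$ with $i_l\in\{1,\dots,h_l\}$, i.e. a choice of one node per layer; it uses the $L$ edges $O^{l-1}_{i_{l-1}}\to O^l_{i_l}$. Represent a path by the vector $p\in\{0,1\}^m$ with $p_e=1$ iff edge $e$ is used by the path. The structure matrix $A$ is the $m\times n$ matrix whose columns are the vectors $p$ of all $n=\prod_{l=0}^L h_l$ paths, and its rank is the maximal number of linearly independent columns over $\mathbb{R}$. (The paper phrases this in the "generalized linear space" $(\mathbb{R}\setminus\{0\})^m$ with addition $w\oplus w'=(w_1w'_1,\dots,w_mw'_m)$ and scalar multiplication $\alpha\odot w=(\operatorname{sgn}(w_i)|w_i|^{\ln\alpha})_i$ for $\alpha>0$, encoding a path with entries $e$ on used edges and $1$ elsewhere; linear (in)dependence of path vectors there is the same as real linear (in)dependence of the corresponding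 $0/1$ vectors.) *)

theory Defs
  imports Complex_Main
begin

text \<open>Network with layer widths h 0, ..., h L. Nodes of layer l are indexed 0..h l - 1.
An edge O^{l-1}_i -> O^l_j is encoded as the triple (l, i, j) with 1 <= l <= L.\<close>

type_synonym edge = "nat \<times> nat \<times> nat"

definition edges :: "nat \<Rightarrow> (nat \<Rightarrow> nat) \<Rightarrow> edge set" where
  "edges L h = {(l, i, j). 1 \<le> l \<and> l \<le> L \<and> i < h (l - 1) \<and> j < h l}"

definition num_weights :: "nat \<Rightarrow> (nat \<Rightarrow> nat) \<Rightarrow> nat" where
  "num_weights L h = (\<Sum>l = 1..L. h (l - 1) * h l)"

definition num_hidden :: "nat \<Rightarrow> (nat \<Rightarrow> nat) \<Rightarrow> nat" where
  "num_hidden L h = (\<Sum>l = 1..L - 1. h l)"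

definition paths :: "nat \<Rightarrow> (nat \<Rightarrow> nat) \<Rightarrow> (nat \<Rightarrow> nat) set" where
  "paths L h = {p. (\<forall>l\<le>L. p l < h l) \<and> (\<forall>l>L. p l = 0)}"

definition path_vec :: "nat \<Rightarrow> (nat \<Rightarrow> nat) \<Rightarrow> edge \<Rightarrow> real" where
  "path_vec L p = (\<lambda>(l, i, j). if 1 \<le> l \<and> l \<le> L \<and> i = p (l - 1) \<and> j = p l then 1 else 0)"

definition structure_columns :: "nat \<Rightarrow> (nat \<Rightarrow> nat) \<Rightarrow> (edge \<Rightarrow> real) set" where
  "structure_columns L h = path_vec L ` paths L h"

definition lin_indep :: "(edge \<Rightarrow> real) set \<Rightarrow> bool" where
  "lin_indep S \<longleftrightarrow> finite S \<and>
     (\<forall>c. (\<forall>e. (\<Sum>v\<in>S. c v * v e) = 0) \<longrightarrow> (\<forall>v\<in>S. c v = 0))"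

definition structure_rank :: "nat \<Rightarrow> (nat \<Rightarrow> nat) \<Rightarrow> nat" where
  "structure_rank L h = Max {card S | S. S \<subseteq> structure_columns L h \<and> lin_indep S}"

end

theory Submission
  imports Defs "HOL-Library.Function_Algebras"
begin

text \<open>Let \<open>P(e)\<close> be the path through the edge \<open>e\<close> that uses node 0 in every other layer.
  The columns of the paths \<open>P(e)\<close>, where \<open>e\<close> ranges over all edges except the \<open>H\<close> edges
  leaving node 0 of a layer \<open>l < L - 1\<close>, form a basis of the column space.
  They span: \<open>P(l, 0, j)\<close> with \<open>l < L\<close> equals \<open>P(l + 1, j, 0)\<close> (or \<open>P(L, 0, 0)\<close> if \<open>j = 0\<close>),
  and every path telescopes, layer by layer, into a signed sum of columns \<open>P(e)\<close>.
  They are independent: the column of \<open>P(e)\<close> has a 1 at coordinate \<open>e\<close>, and at the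
  coordinate of another such edge it can only be nonzero if that edge has strictly more
  endpoints equal to node 0, so the matrix is unitriangular.\<close>

interpretation real_fun: vector_space "\<lambda>c (f :: 'a \<Rightarrow> real) x. c * f x"
  by unfold_locales (auto simp: fun_eq_iff algebra_simps)

lemma sum_fun_apply: "(\<Sum>v\<in>T. (g v :: 'a \<Rightarrow> 'b :: comm_monoid_add)) x = (\<Sum>v\<in>T. g v x)"
  by (induction T rule: infinite_finite_induct) auto

lemma lin_indep_imp_independent:
  assumes "lin_indep T"
  shows "real_fun.independent T"
proof
  assume "real_fun.dependent T"
  then obtain t u v where t: "finite t" "t \<subseteq> T" "(\<Sum>w\<in>t. (\<lambda>x. u w * w x)) = 0"
      and v: "v \<in> t" "u v \<noteq> 0"
    unfolding real_fun.dependent_explicit by blast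
  define c where "c w = (if w \<in> t then u w else 0)" for w
  have "finite T" using assms by (simp add: lin_indep_def)
  have "(\<Sum>w\<in>T. c w * w e) = 0" for e
  proof -
    have "(\<Sum>w\<in>T. c w * w e) = (\<Sum>w\<in>T \<inter> t. u w * w e)"
      using \<open>finite T\<close> by (auto simp: sum.inter_restrict c_def intro!: sum.cong)
    also have "\<dots> = (\<Sum>w\<in>t. (\<lambda>x. u w * w x)) e"
      using t(2) by (simp add: sum_fun_apply Int_absorb1)
    finally show ?thesis using t(3) by simp
  qed
  then have "c v = 0" using assms t(2) v(1) by (auto simp: lin_indep_def)
  then show False using v by (simp add: c_def)
qed

lemma lin_indep_card_le_span:
  assumes "finite S" "lin_indep T" "T \<subseteq> real_fun.span S"
  shows "card T \<le> card S"
  using real_fun.independent_span_bound[OF assms(1) lin_indep_imp_independent[OF assms(2)] assms(3)]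
  by simp

lemma triangular_inj_on:
  assumes diag: "\<And>a. a \<in> I \<Longrightarrow> v a (x a) \<noteq> 0"
    and below: "\<And>a b. a \<in> I \<Longrightarrow> b \<in> I \<Longrightarrow> b \<noteq> a \<Longrightarrow> v b (x a) \<noteq> 0 \<Longrightarrow> r b < (r a :: nat)"
  shows "inj_on v I"
proof (rule inj_onI, rule ccontr)
  fix a b assume ab: "a \<in> I" "b \<in> I" "v a = v b" "a \<noteq> b"
  then have "r b < r a" using below[of a b] diag[of a] by simp
  moreover have "r a < r b" using ab below[of b a] diag[of b] by simp
  ultimately show False by simp
qed

lemma triangular_lin_indep:
  assumes "finite I"
    and diag: "\<And>a. a \<in> I \<Longrightarrow> v a (x a) \<noteq> 0"
    and below: "\<And>a b. a \<in> I \<Longrightarrow> b \<in> I \<Longrightarrow> b \<noteq> a \<Longrightarrow> v b (x a) \<noteq> 0 \<Longrightarrow> r b < (r a :: nat)"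
  shows "lin_indep (v ` I)"
  unfolding lin_indep_def
proof (intro conjI allI impI ballI)
  show "finite (v ` I)" using assms(1) by simp
  fix c u assume zero: "\<forall>e. (\<Sum>w\<in>v ` I. c w * w e) = 0" and "u \<in> v ` I"
  have inj: "inj_on v I" using triangular_inj_on diag below by blast
  have zero_I: "(\<Sum>b\<in>I. c (v b) * v b e) = 0" for e
    using zero[rule_format, of e] sum.reindex[OF inj, of "\<lambda>w. c w * w e"] by simp
  have "c (v a) = 0" if "a \<in> I" for a
    using that
  proof (induction "r a" arbitrary: a rule: less_induct)
    case less
    have "(\<Sum>b\<in>I. c (v b) * v b (x a)) = c (v a) * v a (x a) + (\<Sum>b\<in>I - {a}. c (v b) * v b (x a))"
      using assms(1) less.prems by (simp add: sum.remove)
    also have "(\<Sum>b\<in>I - {a}. c (v b) * v b (x a)) = 0"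
      using less below[of a] by (intro sum.neutral) fastforce
    finally show ?case using zero_I diag[OF less.prems] by simp
  qed
  then show "c u = 0" using \<open>u \<in> v ` I\<close> by blast
qed

lemma structure_rank_eq_card:
  assumes "B \<subseteq> structure_columns L h" "lin_indep B"
    and "structure_columns L h \<subseteq> real_fun.span B"
  shows "structure_rank L h = card B"
  unfolding structure_rank_def
proof (rule Max_eqI)
  have fin: "finite B" using assms(2) by (simp add: lin_indep_def)
  have le: "card S \<le> card B" if "S \<subseteq> structure_columns L h" "lin_indep S" for S
    using lin_indep_card_le_span[OF fin that(2)] that(1) assms(3) by blast
  then show "finite {card S |S. S \<subseteq> structure_columns L h \<and> lin_indep S}"
    by (intro finite_subset[OF _ finite_atMost[of "card B"]]) auto
  show "y \<le> card B" if "y \<in> {card S |S. S \<subseteq> structure_columns L h \<and> lin_indep S}" for y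
    using that le by auto
  show "card B \<in> {card S |S. S \<subseteq> structure_columns L h \<and> lin_indep S}"
    using assms(1,2) by blast
qed

definition edge_path :: "edge \<Rightarrow> nat \<Rightarrow> nat" where
  "edge_path e = (case e of (l, i, j) \<Rightarrow> (\<lambda>k. if k = l - 1 then i else if k = l then j else 0))"

definition edge_column :: "nat \<Rightarrow> edge \<Rightarrow> edge \<Rightarrow> real" where
  "edge_column L e = path_vec L (edge_path e)"

definition basis_edges :: "nat \<Rightarrow> (nat \<Rightarrow> nat) \<Rightarrow> edge set" where
  "basis_edges L h = {(l, i, j) \<in> edges L h. i = 0 \<longrightarrow> l = L}"

definition zero_ends :: "edge \<Rightarrow> nat" where
  "zero_ends e = (case e of (l, i, j) \<Rightarrow> of_bool (i = 0) + of_bool (j = 0))"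

lemma edges_eq_Sigma: "edges L h = Sigma {1..L} (\<lambda>l. {..<h (l - 1)} \<times> {..<h l})"
  by (auto simp: edges_def)

lemma finite_edges: "finite (edges L h)"
  by (simp add: edges_eq_Sigma)

lemma card_edges: "card (edges L h) = num_weights L h"
  by (simp add: edges_eq_Sigma num_weights_def card_cartesian_product)

lemma basis_edges_subset: "basis_edges L h \<subseteq> edges L h"
  by (auto simp: basis_edges_def)

lemma finite_basis_edges: "finite (basis_edges L h)"
  by (rule finite_subset[OF basis_edges_subset finite_edges])

lemma card_basis_edges:
  assumes "\<forall>l\<le>L. h l \<ge> 1"
  shows "card (basis_edges L h) = num_weights L h - num_hidden L h"
proof -
  define X where "X = Sigma {1..L - 1} (\<lambda>l. {0::nat} \<times> {..<h l})"
  have pos: "0 < h k" if "k \<le> L" for k using assms that by fastforce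
  have "X \<subseteq> edges L h"
    by (auto simp: X_def edges_def intro!: pos)
  moreover have "basis_edges L h = edges L h - X"
    by (auto simp: basis_edges_def X_def edges_def)
  moreover have "card X = num_hidden L h"
    by (simp add: X_def num_hidden_def card_cartesian_product)
  ultimately show ?thesis
    using card_Diff_subset[OF finite_subset[OF _ finite_edges]] by (simp add: card_edges)
qed

lemma edge_path_simps:
  "edge_path (l, i, j) (l - 1) = i"
  "1 \<le> l \<Longrightarrow> edge_path (l, i, j) l = j"
  "k \<noteq> l - 1 \<Longrightarrow> k \<noteq> l \<Longrightarrow> edge_path (l, i, j) k = 0"
  by (auto simp: edge_path_def)

lemma edge_path_in_paths:
  assumes "\<forall>l\<le>L. h l \<ge> 1" "e \<in> edges L h"
  shows "edge_path e \<in> paths L h"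
  using assms by (auto simp: edge_path_def paths_def edges_def Suc_le_eq)

lemma edge_column_diag:
  "e \<in> edges L h \<Longrightarrow> edge_column L e e = 1"
  by (auto simp: edge_column_def path_vec_def edge_path_def edges_def)

lemma edge_column_triangular:
  assumes "e \<in> basis_edges L h" "e' \<in> basis_edges L h" "e' \<noteq> e" "edge_column L e' e \<noteq> 0"
  shows "zero_ends e' < zero_ends e"
proof -
  obtain l i j l' i' j' where ed: "e = (l, i, j)" "e' = (l', i', j')"
    by (cases e, cases e') auto
  note e = assms(1)[unfolded ed] and e' = assms(2)[unfolded ed]
    and ne = assms(3)[unfolded ed] and nz = assms(4)[unfolded ed]
  have l: "1 \<le> l" "l \<le> L" "1 \<le> l'" "l' \<le> L" "i = 0 \<Longrightarrow> l = L" "i' = 0 \<Longrightarrow> l' = L"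
    using e e' by (auto simp: basis_edges_def edges_def)
  have ij: "i = edge_path (l', i', j') (l - 1)" "j = edge_path (l', i', j') l"
    using nz by (auto simp: edge_column_def path_vec_def split: if_splits)
  consider "l = l'" | "l = Suc l'" | "Suc l = l'" | "l \<noteq> l'" "l \<noteq> Suc l'" "Suc l \<noteq> l'"
    by blast
  then show ?thesis
  proof cases
    case 1
    then have False using ij ne l(3) edge_path_simps(1) by (simp add: edge_path_simps)
    then show ?thesis ..
  next
    case 2
    then have "l - 1 = l'" "l \<noteq> l' - 1" by simp_all
    then have "i = j'" "j = 0" using ij 2 l(3) by (simp_all add: edge_path_simps)
    then show ?thesis using 2 l ed by (auto simp: zero_ends_def)
  next
    case 3
    then have "l - 1 \<noteq> l' - 1" "l - 1 \<noteq> l'" using l(1) by simp_all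
    then have "i = 0" using ij by (simp add: edge_path_simps)
    then show ?thesis using 3 l by simp
  next
    case 4
    then have "l - 1 \<noteq> l' - 1" "l - 1 \<noteq> l'" "l \<noteq> l' - 1" using l(1,3) by linarith+
    then have "i = 0" "j = 0" using ij 4 by (simp_all add: edge_path_simps)
    then show ?thesis using 4 l ed by (auto simp: zero_ends_def)
  qed
qed

lemma lin_indep_basis_columns: "lin_indep (edge_column L ` basis_edges L h)"
  by (rule triangular_lin_indep[OF finite_basis_edges, where x = id and r = zero_ends])
    (use edge_column_diag basis_edges_subset edge_column_triangular in fastforce)+

lemma card_basis_columns: "card (edge_column L ` basis_edges L h) = card (basis_edges L h)"
  by (rule card_image, rule triangular_inj_on[where x = id and r = zero_ends])
    (use edge_column_diag basis_edges_subset edge_column_triangular in fastforce)+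

lemma edge_path_basis_edge:
  assumes "L \<ge> 1" "\<forall>l\<le>L. h l \<ge> 1" "(l, i, j) \<in> edges L h"
  shows "\<exists>e\<in>basis_edges L h. edge_path e = edge_path (l, i, j)"
proof -
  have m: "1 \<le> l" "l \<le> L" "i < h (l - 1)" "j < h l" using assms(3) by (auto simp: edges_def)
  have pos: "0 < h k" if "k \<le> L" for k using assms(2) that by fastforce
  consider "i \<noteq> 0 \<or> l = L" | "i = 0" "l < L" "j = 0" | "i = 0" "l < L" "j \<noteq> 0"
    using m by linarith
  then show ?thesis
  proof cases
    case 1
    then show ?thesis using assms(3) by (auto simp: basis_edges_def)
  next
    case 2
    have "(L, 0, 0) \<in> basis_edges L h"
      using pos[of L] pos[of "L - 1"] assms(1) by (auto simp: basis_edges_def edges_def)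
    moreover have "edge_path (L, 0, 0) = edge_path (l, i, j)"
      using 2 by (auto simp: edge_path_def fun_eq_iff)
    ultimately show ?thesis by blast
  next
    case 3
    have "(Suc l, j, 0) \<in> basis_edges L h"
      using pos[of "Suc l"] m 3 by (auto simp: basis_edges_def edges_def)
    moreover have "edge_path (Suc l, j, 0) = edge_path (l, i, j)"
      using 3 m by (auto simp: edge_path_def fun_eq_iff)
    ultimately show ?thesis by blast
  qed
qed

lemma edge_column_in_span:
  assumes "L \<ge> 1" "\<forall>l\<le>L. h l \<ge> 1" "e \<in> edges L h"
  shows "edge_column L e \<in> real_fun.span (edge_column L ` basis_edges L h)"
proof -
  obtain e' where "e' \<in> basis_edges L h" "edge_path e' = edge_path e"
    using edge_path_basis_edge[OF assms(1,2)] assms(3) by (cases e) blast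
  then show ?thesis
    by (metis edge_column_def image_eqI real_fun.span_base)
qed

lemma path_vec_prefix_Suc:
  "path_vec L (\<lambda>k. if k \<le> Suc t then p k else 0) =
     path_vec L (\<lambda>k. if k \<le> t then p k else 0)
     + edge_column L (Suc t, p t, p (Suc t)) - edge_column L (Suc t, p t, 0)"
proof
  fix x
  have "path_vec L (\<lambda>k. if k \<le> Suc t then p k else 0) x + edge_column L (Suc t, p t, 0) x =
      path_vec L (\<lambda>k. if k \<le> t then p k else 0) x + edge_column L (Suc t, p t, p (Suc t)) x"
    by (auto simp: edge_column_def path_vec_def edge_path_def split: prod.splits)
  then show "path_vec L (\<lambda>k. if k \<le> Suc t then p k else 0) x =
      (path_vec L (\<lambda>k. if k \<le> t then p k else 0)
       + edge_column L (Suc t, p t, p (Suc t)) - edge_column L (Suc t, p t, 0)) x"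
    by simp
qed

lemma path_vec_in_span:
  assumes "L \<ge> 1" "\<forall>l\<le>L. h l \<ge> 1" "p \<in> paths L h"
  shows "path_vec L p \<in> real_fun.span (edge_column L ` basis_edges L h)"
proof -
  have p: "\<And>l. l \<le> L \<Longrightarrow> p l < h l" "\<And>l. l > L \<Longrightarrow> p l = 0"
    using assms(3) by (auto simp: paths_def)
  have pos: "0 < h k" if "k \<le> L" for k using assms(2) that by fastforce
  have prefix: "path_vec L (\<lambda>k. if k \<le> t then p k else 0) \<in> real_fun.span (edge_column L ` basis_edges L h)"
    if "t \<le> L" for t
    using that
  proof (induction t)
    case 0
    have "(1, p 0, 0) \<in> edges L h" using p(1)[of 0] pos[of 1] assms(1) by (auto simp: edges_def)
    moreover have "(\<lambda>k. if k \<le> 0 then p k else 0) = edge_path (1, p 0, 0)"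
      by (auto simp: edge_path_def fun_eq_iff)
    ultimately show ?case using edge_column_in_span[OF assms(1,2)] by (simp add: edge_column_def)
  next
    case (Suc t)
    have "(Suc t, p t, 0) \<in> edges L h" "(Suc t, p t, p (Suc t)) \<in> edges L h"
      using p(1)[of t] p(1)[of "Suc t"] pos[of "Suc t"] Suc.prems by (auto simp: edges_def)
    then show ?case using Suc unfolding path_vec_prefix_Suc
      by (intro real_fun.span_diff real_fun.span_add edge_column_in_span[OF assms(1,2)]) simp_all
  qed
  have "(\<lambda>k. if k \<le> L then p k else 0) = p" using p(2) by (auto simp: fun_eq_iff)
  then show ?thesis using prefix[of L] by simp
qed

theorem theorem3p4:
  fixes L :: nat and h :: "nat \<Rightarrow> nat"
  assumes "L \<ge> 2"
    and "\<forall>l\<le>L. h l \<ge> 1"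
  shows "structure_rank L h = num_weights L h - num_hidden L h"
proof -
  have L: "L \<ge> 1" using assms(1) by simp
  have "edge_path ` basis_edges L h \<subseteq> paths L h"
    using edge_path_in_paths[OF assms(2)] by (auto simp: basis_edges_def)
  then have "edge_column L ` basis_edges L h \<subseteq> structure_columns L h"
    unfolding structure_columns_def edge_column_def by blast
  moreover have "structure_columns L h \<subseteq> real_fun.span (edge_column L ` basis_edges L h)"
    using path_vec_in_span[OF L assms(2)] by (auto simp: structure_columns_def)
  ultimately have "structure_rank L h = card (edge_column L ` basis_edges L h)"
    by (rule structure_rank_eq_card[OF _ lin_indep_basis_columns])
  then show ?thesis
    using card_basis_columns card_basis_edges[OF assms(2)] by simp
qed

end
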